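(* Let $N$ be a simply connected $2$-step nilpotent Lie group with Lie algebra $\mathfrak n$ and a left-invariant pseudo-Riemannian metric $\langle\cdot,\cdot\rangle$ whose center $\mathfrak z$ is nondegenerate, and suppose $(N,\langle\cdot,\cdot\rangle)$ is of pseudo$H$-type. Then $(N,\langle\cdot,\cdot\rangle)$ has a nontrivial nilsoliton, i.e. there exist $c\in\mathbb R$ and a derivation $D$ of $\mathfrak n$ with $\mathrm{Ric}=c\cdot\mathrm{Id}+D$.
   Context: For $y\in\mathfrak n$ define $J_y:\mathfrak n\to\mathfrak n$ by $\langle J_y x,w\rangle=\langle y,[x,w]\rangle$ for all $x,w\in\mathfrak n$. With nondegenerate center $\mathfrak z$ put $\mathfrak v=\mathfrak z^{\perp}$, so $\mathfrak n=\mathfrak z\oplus\mathfrak v$ and $J_z$ preserves $\mathfrak v$ for $z\in\mathfrak z$. The group is of pseudo$H$-type if $J_z^2=\langle z,z\rangle I$ on $\mathfrak v$ for all $z\in\mathfrak z$. $\mathrm{Ric}$ denotes the Ricci operator of the left-invariant metric, i.e. the endomorphism of $\mathfrak n$ with $\langle \mathrm{Ric}\,x,y\rangle=\varrho(x,y)$, $\varrho$ the Ricci tensor. A left-invariant metric is an algebraic Ricci soliton (on a nilpotent group: a nilsoliton) if $\mathrm{Ric}=c\cdot\mathrm{Id}+D$ for some $c\in\mathbb R$ and some derivation $D$ of $\mathfrak n$ (i.e. $D[X,Y]=[DX,Y]+[X,DY]$). The paper uses "nontrivial" without further definition; here $N$ is non-abelian. *)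

theory Defs
  imports "HOL-Analysis.Analysis"
begin

text \<open>A finite-dimensional real Lie algebra n = real^'n with bracket br and a
 left-invariant pseudo-Riemannian metric, i.e. a symmetric nondegenerate bilinear form g.\<close>

definition lie_bracket :: "(real^'n \<Rightarrow> real^'n \<Rightarrow> real^'n) \<Rightarrow> bool" where
  "lie_bracket br \<longleftrightarrow> bilinear br \<and> (\<forall>x. br x x = 0) \<and>
     (\<forall>x y w. br x (br y w) + br y (br w x) + br w (br x y) = 0)"

definition two_step_nilpotent :: "(real^'n \<Rightarrow> real^'n \<Rightarrow> real^'n) \<Rightarrow> bool" where
  "two_step_nilpotent br \<longleftrightarrow> (\<forall>x y w. br (br x y) w = 0) \<and> (\<exists>x y. br x y \<noteq> 0)"

definition pseudo_metric :: "(real^'n \<Rightarrow> real^'n \<Rightarrow> real) \<Rightarrow> bool" where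
  "pseudo_metric g \<longleftrightarrow> bilinear g \<and> (\<forall>x y. g x y = g y x) \<and>
     (\<forall>x. (\<forall>y. g x y = 0) \<longrightarrow> x = 0)"

definition center :: "(real^'n \<Rightarrow> real^'n \<Rightarrow> real^'n) \<Rightarrow> (real^'n) set" where
  "center br = {x. \<forall>y. br x y = 0}"

definition nondegenerate_on :: "(real^'n \<Rightarrow> real^'n \<Rightarrow> real) \<Rightarrow> (real^'n) set \<Rightarrow> bool" where
  "nondegenerate_on g S \<longleftrightarrow> (\<forall>x\<in>S. (\<forall>y\<in>S. g x y = 0) \<longrightarrow> x = 0)"

definition orth_compl :: "(real^'n \<Rightarrow> real^'n \<Rightarrow> real) \<Rightarrow> (real^'n) set \<Rightarrow> (real^'n) set" where
  "orth_compl g S = {x. \<forall>z\<in>S. g x z = 0}"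

definition Jmap :: "(real^'n \<Rightarrow> real^'n \<Rightarrow> real^'n) \<Rightarrow> (real^'n \<Rightarrow> real^'n \<Rightarrow> real)
    \<Rightarrow> real^'n \<Rightarrow> real^'n \<Rightarrow> real^'n" where
  "Jmap br g y x = (THE u. \<forall>w. g u w = g y (br x w))"

definition pseudoH_type :: "(real^'n \<Rightarrow> real^'n \<Rightarrow> real^'n) \<Rightarrow> (real^'n \<Rightarrow> real^'n \<Rightarrow> real) \<Rightarrow> bool" where
  "pseudoH_type br g \<longleftrightarrow>
     (\<forall>z\<in>center br. \<forall>v\<in>orth_compl g (center br).
        Jmap br g z (Jmap br g z v) = g z z *\<^sub>R v)"

text \<open>Levi-Civita connection on left-invariant fields (Koszul formula):
  2 g (\<nabla>_x y) w = g [x,y] w - g [y,w] x + g [w,x] y.\<close>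
definition LC :: "(real^'n \<Rightarrow> real^'n \<Rightarrow> real^'n) \<Rightarrow> (real^'n \<Rightarrow> real^'n \<Rightarrow> real)
    \<Rightarrow> real^'n \<Rightarrow> real^'n \<Rightarrow> real^'n" where
  "LC br g x y = (THE u. \<forall>w. g u w = (g (br x y) w - g (br y w) x + g (br w x) y) / 2)"

definition curv :: "(real^'n \<Rightarrow> real^'n \<Rightarrow> real^'n) \<Rightarrow> (real^'n \<Rightarrow> real^'n \<Rightarrow> real)
    \<Rightarrow> real^'n \<Rightarrow> real^'n \<Rightarrow> real^'n \<Rightarrow> real^'n" where
  "curv br g x y w = LC br g x (LC br g y w) - LC br g y (LC br g x w) - LC br g (br x y) w"

definition ricci_tensor :: "(real^'n \<Rightarrow> real^'n \<Rightarrow> real^'n) \<Rightarrow> (real^'n \<Rightarrow> real^'n \<Rightarrow> real)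
    \<Rightarrow> real^'n \<Rightarrow> real^'n \<Rightarrow> real" where
  "ricci_tensor br g y w = trace (matrix (\<lambda>x. curv br g x y w))"

definition ricci_op :: "(real^'n \<Rightarrow> real^'n \<Rightarrow> real^'n) \<Rightarrow> (real^'n \<Rightarrow> real^'n \<Rightarrow> real)
    \<Rightarrow> real^'n \<Rightarrow> real^'n" where
  "ricci_op br g x = (THE u. \<forall>y. g u y = ricci_tensor br g x y)"

definition derivation :: "(real^'n \<Rightarrow> real^'n \<Rightarrow> real^'n) \<Rightarrow> (real^'n \<Rightarrow> real^'n) \<Rightarrow> bool" where
  "derivation br D \<longleftrightarrow> linear D \<and> (\<forall>x y. D (br x y) = br (D x) y + br x (D y))"

end

theory Submission
  imports Defs
begin

text \<open>The Koszul formula gives \<open>\<nabla>\<^sub>x y = (1/2) ([x,y] - J\<^sub>x y - J\<^sub>y x)\<close>, where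
  \<open>J\<^sub>y = 0\<close> for \<open>y \<in> v\<close> and \<open>J\<close> takes values in \<open>v\<close>. Let \<open>P\<close>, \<open>Q\<close> be the orthogonal projections onto
  \<open>z\<close> and \<open>v\<close>. Each trace occurring in the Ricci tensor either vanishes, because the map
  factors through \<open>z \<rightarrow> v \<rightarrow> z\<close> or is skew-adjoint, or reduces to \<open>\<Sum>\<^sub>i J\<^bsub>E\<^sub>i\<^esub> J\<^bsub>e\<^sub>i\<^esub>\<close> for a
  pair of \<open>g\<close>-dual bases, which by polarizing \<open>J\<^sub>z\<^sup>2 = \<langle>z,z\<rangle>\<close> equals \<open>(tr P) Q\<close>. Hence
  \<open>Ric = (tr P / 2) Q - (tr Q / 4) P\<close>. Finally \<open>a Q + b P = (2a - b) Id + D\<close> with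
  \<open>D = (b - a) (Q + 2 P)\<close>, a derivation because \<open>[n,n] \<subseteq> z\<close> and \<open>z\<close> is central.\<close>

section \<open>Traces of linear maps\<close>

lemma linear_eq_sum_axis:
  fixes f :: "real^'n \<Rightarrow> 'b::real_vector"
  assumes "linear f"
  shows "f w = (\<Sum>i\<in>UNIV. (w$i) *\<^sub>R f (axis i 1))"
proof -
  have "f w = f (\<Sum>i\<in>UNIV. (w$i) *\<^sub>R axis i 1)"
    using basis_expansion[of w] by (simp add: scalar_mult_eq_scaleR)
  also have "\<dots> = (\<Sum>i\<in>UNIV. (w$i) *\<^sub>R f (axis i 1))"
    using assms by (simp add: linear_sum linear_scale)
  finally show ?thesis .
qed

definition map_trace :: "(real^'n \<Rightarrow> real^'n) \<Rightarrow> real" where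
  "map_trace f = trace (matrix f)"

lemma map_trace_eq_sum: "map_trace f = (\<Sum>i\<in>UNIV. f (axis i 1) $ i)"
  by (simp add: map_trace_def trace_def matrix_def)

lemma map_trace_add: "map_trace (\<lambda>x. f x + h x) = map_trace f + map_trace h"
  by (simp add: map_trace_eq_sum sum.distrib)

lemma map_trace_diff: "map_trace (\<lambda>x. f x - h x) = map_trace f - map_trace h"
  by (simp add: map_trace_eq_sum sum_subtractf)

lemma map_trace_scaleR: "map_trace (\<lambda>x. c *\<^sub>R f x) = c * map_trace f"
  by (simp add: map_trace_eq_sum sum_distrib_left)

lemma map_trace_neg: "map_trace (\<lambda>x. - f x) = - map_trace f"
  by (simp add: map_trace_eq_sum sum_negf)

lemma map_trace_comp_commute:
  assumes "linear A" "linear B"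
  shows "map_trace (\<lambda>x. A (B x)) = map_trace (\<lambda>x. B (A x))"
proof -
  have "map_trace (\<lambda>x. A (B x)) = trace (matrix A ** matrix B)"
    using matrix_compose[OF assms(2,1)] by (simp add: map_trace_def o_def)
  also have "\<dots> = trace (matrix B ** matrix A)" by (rule trace_mul_sym)
  also have "\<dots> = map_trace (\<lambda>x. B (A x))"
    using matrix_compose[OF assms] by (simp add: map_trace_def o_def)
  finally show ?thesis .
qed

lemma map_trace_eq_0_if_factors:
  assumes "linear f" "linear A" "linear B"
    and factors: "\<And>x. f x = A (f (B x))" and "\<And>x. B (A x) = 0"
  shows "map_trace f = 0"
proof -
  have "linear (\<lambda>x. f (B x))"
    using linear_compose[OF assms(3,1)] by (simp add: o_def)
  have "f = (\<lambda>x. A (f (B x)))"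
    by (rule ext) (rule factors)
  then have "map_trace f = map_trace (\<lambda>x. A (f (B x)))"
    by (rule arg_cong)
  also have "\<dots> = map_trace (\<lambda>x. f (B (A x)))"
    by (rule map_trace_comp_commute) fact+
  also have "\<dots> = 0"
    using assms(5) linear_0[OF assms(1)] by (simp add: map_trace_eq_sum)
  finally show ?thesis .
qed

section \<open>Nondegenerate symmetric bilinear forms\<close>

locale pseudo_euclidean =
  fixes g :: "real^'n \<Rightarrow> real^'n \<Rightarrow> real"
  assumes metric: "pseudo_metric g"
begin

lemma bilinear_form: "bilinear g"
  using metric by (simp add: pseudo_metric_def)

lemma form_sym: "g x y = g y x"
  using metric by (simp add: pseudo_metric_def)

lemmas form_simps = bilinear_ladd[OF bilinear_form] bilinear_radd[OF bilinear_form]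
  bilinear_lmul[OF bilinear_form] bilinear_rmul[OF bilinear_form]
  bilinear_lneg[OF bilinear_form] bilinear_rneg[OF bilinear_form]
  bilinear_lzero[OF bilinear_form] bilinear_rzero[OF bilinear_form]
  bilinear_lsub[OF bilinear_form] bilinear_rsub[OF bilinear_form]

lemma linear_form_left: "linear (\<lambda>u. g u w)"
  using bilinear_form by (simp add: bilinear_def)

lemma linear_form_right: "linear (g u)"
  using bilinear_form by (simp add: bilinear_def)

lemma form_sum_left: "g (sum f S) y = (\<Sum>i\<in>S. g (f i) y)"
  using linear_sum[OF linear_form_left[of y]] by (simp add: o_def)

lemma form_sum_right: "g y (sum f S) = (\<Sum>i\<in>S. g y (f i))"
  using linear_sum[OF linear_form_right[of y]] by (simp add: o_def)

lemma form_eq_imp_eq: "(\<And>w. g u w = g u' w) \<Longrightarrow> u = u'"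
  using metric unfolding pseudo_metric_def by (metis form_simps(10) right_minus_eq)

definition flat :: "real^'n \<Rightarrow> real^'n" where
  "flat u = (\<chi> i. g u (axis i 1))"

lemma form_eq_inner_flat: "g u w = flat u \<bullet> w"
  using linear_eq_sum_axis[OF linear_form_right, of u w]
  by (simp add: flat_def inner_vec_def mult.commute)

lemma linear_flat: "linear flat"
  unfolding flat_def by (rule linearI) (auto simp: vec_eq_iff form_simps)

lemma inj_flat: "inj flat"
  by (rule injI, rule form_eq_imp_eq) (simp add: form_eq_inner_flat)

lemma surj_flat: "surj flat"
  using linear_injective_imp_surjective[OF linear_flat inj_flat] by simp

lemma representative_exists:
  assumes "linear \<phi>"
  shows "\<exists>u. \<forall>w. g u w = \<phi> w"
proof -
  obtain u where "flat u = (\<chi> i. \<phi> (axis i 1))"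
    using surj_flat by (metis surj_def)
  moreover have "\<phi> w = (\<chi> i. \<phi> (axis i 1)) \<bullet> w" for w
    using linear_eq_sum_axis[OF assms, of w] by (simp add: inner_vec_def mult.commute)
  ultimately show ?thesis by (metis form_eq_inner_flat)
qed

lemma the_representative_eq:
  assumes "\<forall>w. g u w = \<phi> w"
  shows "(THE u. \<forall>w. g u w = \<phi> w) = u"
  using assms by (intro the_equality) (auto intro!: form_eq_imp_eq)

lemma form_the_representative:
  assumes "linear \<phi>"
  shows "g (THE u. \<forall>w. g u w = \<phi> w) w = \<phi> w"
  using representative_exists[OF assms] the_representative_eq by metis

definition dual_basis :: "'n \<Rightarrow> real^'n" where
  "dual_basis i = (THE u. \<forall>w. g u w = w $ i)"

lemma form_dual_basis: "g (dual_basis i) w = w $ i"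
  unfolding dual_basis_def by (rule form_the_representative) (rule linearI, simp_all)

lemma dual_basis_component_sym: "dual_basis j $ i = dual_basis i $ j"
  using form_dual_basis[of i "dual_basis j"] form_dual_basis[of j "dual_basis i"]
    form_sym[of "dual_basis i" "dual_basis j"] by simp

lemma map_trace_eq_sum_dual_basis:
  "map_trace f = (\<Sum>i\<in>UNIV. g (dual_basis i) (f (axis i 1)))"
  by (simp add: map_trace_eq_sum form_dual_basis)

lemma sum_dual_basis_swap:
  fixes B :: "real^'n \<Rightarrow> real^'n \<Rightarrow> 'v::real_vector"
  assumes linear_left: "\<And>b. linear (\<lambda>a. B a b)" and linear_right: "\<And>a. linear (B a)"
  shows "(\<Sum>i\<in>UNIV. B (dual_basis i) (axis i 1)) = (\<Sum>i\<in>UNIV. B (axis i 1) (dual_basis i))"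
proof -
  have "(\<Sum>i\<in>UNIV. B (axis i 1) (dual_basis i))
      = (\<Sum>i\<in>UNIV. \<Sum>j\<in>UNIV. (dual_basis i $ j) *\<^sub>R B (axis i 1) (axis j 1))"
    by (intro sum.cong refl linear_eq_sum_axis linear_right)
  also have "\<dots> = (\<Sum>j\<in>UNIV. \<Sum>i\<in>UNIV. (dual_basis j $ i) *\<^sub>R B (axis i 1) (axis j 1))"
    by (subst sum.swap) (simp add: dual_basis_component_sym)
  also have "\<dots> = (\<Sum>i\<in>UNIV. B (dual_basis i) (axis i 1))"
    by (intro sum.cong refl linear_eq_sum_axis[symmetric] linear_left)
  finally show ?thesis by simp
qed

lemma map_trace_skew_eq_0:
  assumes "linear f" and skew: "\<And>a b. g (f a) b = - g a (f b)"
  shows "map_trace f = 0"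
proof -
  have linear_left: "linear (\<lambda>a. g (f a) b)" for b
    using linear_compose[OF assms(1) linear_form_left] by (simp add: o_def)
  have "map_trace f = (\<Sum>i\<in>UNIV. g (f (axis i 1)) (dual_basis i))"
    unfolding map_trace_eq_sum_dual_basis by (simp add: form_sym)
  also have "\<dots> = (\<Sum>i\<in>UNIV. g (f (dual_basis i)) (axis i 1))"
    by (rule sum_dual_basis_swap[OF linear_left linear_form_right, symmetric])
  also have "\<dots> = - map_trace f"
    unfolding map_trace_eq_sum_dual_basis skew sum_negf ..
  finally show ?thesis by linarith
qed

end

section \<open>Orthogonal splitting along a nondegenerate subspace\<close>

locale nondegenerate_subspace = pseudo_euclidean g for g :: "real^'n \<Rightarrow> real^'n \<Rightarrow> real" +
  fixes S :: "(real^'n) set"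
  assumes subspace: "subspace S"
    and nondegenerate: "nondegenerate_on g S"
begin

lemma subspace_orth_compl: "subspace (orth_compl g S)"
  unfolding subspace_def orth_compl_def by (simp add: form_simps)

lemma orth_compl_form: "v \<in> orth_compl g S \<Longrightarrow> z \<in> S \<Longrightarrow> g v z = 0"
  by (simp add: orth_compl_def)

lemma orth_compl_form': "v \<in> orth_compl g S \<Longrightarrow> z \<in> S \<Longrightarrow> g z v = 0"
  using orth_compl_form form_sym by metis

lemma inter_orth_compl: "x \<in> S \<Longrightarrow> x \<in> orth_compl g S \<Longrightarrow> x = 0"
  using nondegenerate unfolding nondegenerate_on_def orth_compl_def by blast

lemma dim_orth_compl: "dim (orth_compl g S) + dim S = DIM(real^'n)"
proof -
  define W where "W = {y \<in> UNIV. \<forall>x\<in>S. orthogonal x y}"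
  have "flat ` orth_compl g S = W"
    using surj_f_inv_f[OF surj_flat]
    by (auto simp: W_def orthogonal_def orth_compl_def form_eq_inner_flat inner_commute
        intro!: image_eqI[where x = "inv flat _"])
  then have "dim (orth_compl g S) = dim W"
    using dim_image_eq[OF linear_flat] inj_flat by (metis inj_on_subset top_greatest)
  moreover have "dim W + dim S = dim (UNIV :: (real^'n) set)"
    unfolding W_def by (rule dim_subspace_orthogonal_to_vectors[OF subspace subspace_UNIV]) simp
  ultimately show ?thesis by (simp add: dim_UNIV)
qed

lemma sum_orth_compl_eq_UNIV: "{z + v |z v. z \<in> S \<and> v \<in> orth_compl g S} = UNIV"
proof -
  let ?T = "{z + v |z v. z \<in> S \<and> v \<in> orth_compl g S}"
  have "S \<inter> orth_compl g S = {0}"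
    using inter_orth_compl subspace subspace_orth_compl by (auto simp: subspace_0)
  then have "dim ?T = DIM(real^'n)"
    using dim_sums_Int[OF subspace subspace_orth_compl] dim_orth_compl by simp
  then have "span ?T = UNIV"
    using dim_eq_full by blast
  moreover have "span ?T = ?T"
    using subspace_sums[OF subspace subspace_orth_compl] by (simp add: set_plus_def span_eq_iff)
  ultimately show ?thesis
    by simp
qed

definition proj :: "real^'n \<Rightarrow> real^'n" where
  "proj x = (SOME z. z \<in> S \<and> x - z \<in> orth_compl g S)"

definition proj_orth :: "real^'n \<Rightarrow> real^'n" where
  "proj_orth x = x - proj x"

lemma proj_in: "proj x \<in> S" and proj_orth_in: "proj_orth x \<in> orth_compl g S"
proof -
  obtain z v where "x = z + v" "z \<in> S" "v \<in> orth_compl g S"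
    using sum_orth_compl_eq_UNIV by blast
  then have "\<exists>z. z \<in> S \<and> x - z \<in> orth_compl g S" by auto
  from someI_ex[OF this] show "proj x \<in> S" "proj_orth x \<in> orth_compl g S"
    by (simp_all add: proj_def proj_orth_def)
qed

lemma proj_unique:
  assumes "z \<in> S" "x - z \<in> orth_compl g S"
  shows "proj x = z"
proof -
  have "proj x - z \<in> S"
    using proj_in assms(1) subspace by (simp add: subspace_diff)
  moreover have "proj x - z = (x - z) - proj_orth x"
    by (simp add: proj_orth_def)
  then have "proj x - z \<in> orth_compl g S"
    using proj_orth_in assms(2) subspace_orth_compl by (metis subspace_diff)
  ultimately show ?thesis
    using inter_orth_compl by fastforce
qed

lemma linear_proj: "linear proj"
proof (rule linearI)
  fix x y
  have "x + y - (proj x + proj y) = proj_orth x + proj_orth y"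
    by (simp add: proj_orth_def)
  then show "proj (x + y) = proj x + proj y"
    using proj_in proj_orth_in subspace subspace_orth_compl
    by (intro proj_unique) (simp_all add: subspace_add)
next
  fix c :: real and x
  have "c *\<^sub>R x - c *\<^sub>R proj x = c *\<^sub>R proj_orth x"
    by (simp add: proj_orth_def algebra_simps)
  then show "proj (c *\<^sub>R x) = c *\<^sub>R proj x"
    using proj_in proj_orth_in subspace subspace_orth_compl
    by (intro proj_unique) (simp_all add: subspace_scale)
qed

lemma linear_proj_orth: "linear proj_orth"
  unfolding proj_orth_def using linear_compose_sub[OF linear_id linear_proj] by (simp add: id_def)

lemma proj_id: "z \<in> S \<Longrightarrow> proj z = z"
  by (rule proj_unique) (auto simp: subspace_0[OF subspace_orth_compl])

lemma proj_eq_0: "v \<in> orth_compl g S \<Longrightarrow> proj v = 0"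
  by (rule proj_unique) (auto simp: subspace_0[OF subspace])

lemma proj_orth_id: "v \<in> orth_compl g S \<Longrightarrow> proj_orth v = v"
  by (simp add: proj_orth_def proj_eq_0)

lemma proj_proj_orth: "proj (proj_orth x) = 0"
  by (rule proj_eq_0[OF proj_orth_in])

lemma proj_orth_proj: "proj_orth (proj x) = 0"
  by (simp add: proj_orth_def proj_id proj_in)

lemma proj_add_proj_orth: "proj x + proj_orth x = x"
  by (simp add: proj_orth_def)

lemma form_proj_orth_left: "g (proj_orth a) b = g (proj_orth a) (proj_orth b)"
proof -
  have "g (proj_orth a) b = g (proj_orth a) (proj b + proj_orth b)"
    by (simp add: proj_add_proj_orth)
  then show ?thesis
    by (simp add: form_simps orth_compl_form[OF proj_orth_in proj_in])
qed

lemma form_proj_orth_right: "g a (proj_orth b) = g (proj_orth a) (proj_orth b)"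
proof -
  have "g a (proj_orth b) = g (proj a + proj_orth a) (proj_orth b)"
    by (simp add: proj_add_proj_orth)
  then show ?thesis
    by (simp add: form_simps orth_compl_form'[OF proj_orth_in proj_in])
qed

lemma form_proj_left: "g (proj a) b = g (proj a) (proj b)"
proof -
  have "g (proj a) b = g (proj a) (proj b + proj_orth b)"
    by (simp add: proj_add_proj_orth)
  then show ?thesis
    by (simp add: form_simps orth_compl_form'[OF proj_orth_in proj_in])
qed

end

section \<open>Two-step nilpotent Lie algebras of pseudo-H-type\<close>

locale pseudoH_algebra = pseudo_euclidean g for g :: "real^'n \<Rightarrow> real^'n \<Rightarrow> real" +
  fixes br :: "real^'n \<Rightarrow> real^'n \<Rightarrow> real^'n"
  assumes lie_bracket: "lie_bracket br"
    and two_step: "two_step_nilpotent br"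
    and center_nondegenerate: "nondegenerate_on g (center br)"
    and pseudoH: "pseudoH_type br g"
begin

abbreviation "J \<equiv> Jmap br g"

lemma bilinear_bracket: "bilinear br"
  using lie_bracket by (simp add: lie_bracket_def)

lemmas bracket_simps = bilinear_ladd[OF bilinear_bracket] bilinear_radd[OF bilinear_bracket]
  bilinear_lmul[OF bilinear_bracket] bilinear_rmul[OF bilinear_bracket]
  bilinear_lneg[OF bilinear_bracket] bilinear_rneg[OF bilinear_bracket]
  bilinear_lzero[OF bilinear_bracket] bilinear_rzero[OF bilinear_bracket]
  bilinear_lsub[OF bilinear_bracket] bilinear_rsub[OF bilinear_bracket]

lemma linear_bracket_left: "linear (\<lambda>u. br u w)"
  using bilinear_bracket by (simp add: bilinear_def)

lemma linear_bracket_right: "linear (br u)"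
  using bilinear_bracket by (simp add: bilinear_def)

lemma bracket_antisym: "br y x = - br x y"
proof -
  have "br (x + y) (x + y) = br x x + br y y + (br x y + br y x)"
    by (simp add: bracket_simps)
  then show ?thesis
    using lie_bracket by (simp add: lie_bracket_def eq_neg_iff_add_eq_0 add.commute)
qed

lemma bracket_in_center: "br x y \<in> center br"
  using two_step by (simp add: two_step_nilpotent_def center_def)

lemma center_bracket_left: "z \<in> center br \<Longrightarrow> br z y = 0"
  by (simp add: center_def)

lemma center_bracket_right: "z \<in> center br \<Longrightarrow> br y z = 0"
  by (metis center_bracket_left bracket_antisym neg_equal_0_iff_equal)

lemma subspace_center: "subspace (center br)"
  unfolding subspace_def center_def by (simp add: bracket_simps)

end

sublocale pseudoH_algebra \<subseteq> nondegenerate_subspace g "center br"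
  by unfold_locales (fact subspace_center center_nondegenerate)+

context pseudoH_algebra
begin

lemma form_Jmap: "g (J y x) w = g y (br x w)"
  unfolding Jmap_def
  by (rule form_the_representative, rule linear_compose[OF linear_bracket_right linear_form_right,
        unfolded o_def])

lemma linear_Jmap_left: "linear (\<lambda>a. J a b)"
  by (rule linearI; rule form_eq_imp_eq; simp add: form_Jmap form_simps)

lemma linear_Jmap_right: "linear (J a)"
  by (rule linearI; rule form_eq_imp_eq; simp add: form_Jmap form_simps bracket_simps)

lemmas Jmap_simps = linear_add[OF linear_Jmap_left] linear_add[OF linear_Jmap_right]
  linear_diff[OF linear_Jmap_left] linear_diff[OF linear_Jmap_right]
  linear_scale[OF linear_Jmap_left] linear_scale[OF linear_Jmap_right]
  linear_0[OF linear_Jmap_left] linear_0[OF linear_Jmap_right]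
  linear_neg[OF linear_Jmap_left] linear_neg[OF linear_Jmap_right]

lemma Jmap_skew: "g (J a b) c = - g b (J a c)"
  by (simp add: form_Jmap form_sym[of b] bracket_antisym[of c] form_simps)

lemma Jmap_center_right: "z \<in> center br \<Longrightarrow> J a z = 0"
  by (rule form_eq_imp_eq) (simp add: form_Jmap center_bracket_left form_simps)

lemma Jmap_orth_left: "v \<in> orth_compl g (center br) \<Longrightarrow> J v b = 0"
  by (rule form_eq_imp_eq) (simp add: form_Jmap orth_compl_form bracket_in_center form_simps)

lemma Jmap_in_orth: "J a b \<in> orth_compl g (center br)"
  by (simp add: orth_compl_def form_Jmap center_bracket_right form_simps)

lemma Jmap_proj_left: "J a b = J (proj a) b"
proof -
  have "J a b = J (proj a + proj_orth a) b"
    by (simp add: proj_add_proj_orth)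
  then show ?thesis
    by (simp add: Jmap_simps Jmap_orth_left[OF proj_orth_in])
qed

lemma Jmap_proj_orth_right: "J a b = J a (proj_orth b)"
  by (simp add: proj_orth_def Jmap_simps Jmap_center_right[OF proj_in])

lemma proj_orth_Jmap: "proj_orth (J a b) = J a b"
  by (rule proj_orth_id[OF Jmap_in_orth])

lemma proj_bracket: "proj (br a b) = br a b"
  by (rule proj_id[OF bracket_in_center])

lemma LC_eq: "LC br g x y = (1/2) *\<^sub>R (br x y - J x y - J y x)"
  unfolding LC_def
proof (rule the_representative_eq, rule allI)
  fix w
  have "g (J x y) w = g (br y w) x"
    using form_Jmap[of x y w] form_sym[of x] by simp
  moreover have "g (J y x) w = - g (br w x) y"
    using form_Jmap[of y x w] form_sym[of y] bracket_antisym[of w x] by (simp add: form_simps)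
  ultimately show "g ((1/2) *\<^sub>R (br x y - J x y - J y x)) w
      = (g (br x y) w - g (br y w) x + g (br w x) y) / 2"
    by (simp add: form_simps)
qed

lemma LC_LC_left:
  "LC br g y (LC br g x w) = (1/4) *\<^sub>R (J y (J x w) + J y (J w x)
     - br y (J x w) - br y (J w x) - J (br x w) y)"
  by (simp add: LC_eq bracket_simps Jmap_simps center_bracket_right[OF bracket_in_center]
      Jmap_center_right[OF bracket_in_center] Jmap_orth_left[OF Jmap_in_orth] algebra_simps)

lemma LC_bracket_left: "LC br g (br x y) w = (- 1/2) *\<^sub>R J (br x y) w"
  by (simp add: LC_eq center_bracket_left[OF bracket_in_center] Jmap_center_right[OF bracket_in_center])

lemma Jmap_anticommutator_center:
  assumes "a \<in> center br" "b \<in> center br" "v \<in> orth_compl g (center br)"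
  shows "J a (J b v) + J b (J a v) = (2 * g a b) *\<^sub>R v"
proof -
  have square: "J c (J c v) = g c c *\<^sub>R v" if "c \<in> center br" for c
    using pseudoH assms(3) that by (simp add: pseudoH_type_def)
  have "a + b \<in> center br"
    using assms subspace_center by (simp add: subspace_add)
  then have "J a (J a v) + J b (J b v) + (J a (J b v) + J b (J a v))
      = (g a a + g b b + 2 * g a b) *\<^sub>R v"
    using square[of "a + b"] by (simp add: Jmap_simps form_simps form_sym[of b a] algebra_simps)
  then show ?thesis
    using square assms by (simp add: algebra_simps)
qed

lemma Jmap_anticommutator:
  "J a (J b v) + J b (J a v) = (2 * g (proj a) (proj b)) *\<^sub>R proj_orth v"
proof -
  have "J a (J b v) = J (proj a) (J (proj b) (proj_orth v))"
    using Jmap_proj_left[of a "J b v"] Jmap_proj_left[of b v] Jmap_proj_orth_right[of "proj b" v]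
    by simp
  moreover have "J b (J a v) = J (proj b) (J (proj a) (proj_orth v))"
    using Jmap_proj_left[of b "J a v"] Jmap_proj_left[of a v] Jmap_proj_orth_right[of "proj a" v]
    by simp
  ultimately show ?thesis
    using Jmap_anticommutator_center[OF proj_in proj_in proj_orth_in] by simp
qed

lemma sum_Jmap_Jmap_dual_basis:
  "(\<Sum>i\<in>UNIV. J (dual_basis i) (J (axis i 1) w)) = map_trace proj *\<^sub>R proj_orth w"
    (is "?K = _")
proof -
  have "linear (\<lambda>b. J a (J b w))" for a
    using linear_compose[OF linear_Jmap_left linear_Jmap_right] by (simp add: o_def)
  then have swapped: "?K = (\<Sum>i\<in>UNIV. J (axis i 1) (J (dual_basis i) w))"
    by (rule sum_dual_basis_swap[OF linear_Jmap_left])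
  have "g (proj a) (proj b) = g a (proj b)" for a b
    using form_proj_left[of b a] form_sym by metis
  then have trace: "(\<Sum>i\<in>UNIV. g (proj (dual_basis i)) (proj (axis i 1))) = map_trace proj"
    by (simp add: map_trace_eq_sum_dual_basis)
  have "2 *\<^sub>R ?K = (\<Sum>i\<in>UNIV. J (dual_basis i) (J (axis i 1) w) + J (axis i 1) (J (dual_basis i) w))"
    using swapped by (simp add: scaleR_2 sum.distrib)
  also have "\<dots> = 2 *\<^sub>R (map_trace proj *\<^sub>R proj_orth w)"
    by (simp add: Jmap_anticommutator trace[symmetric] scaleR_sum_left scaleR_sum_right)
  finally show ?thesis
    by (simp only: scaleR_cancel_left) simp
qed

section \<open>The Ricci operator\<close>

lemma map_trace_bracket_left: "map_trace (\<lambda>x. br x u) = 0"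
proof (rule map_trace_eq_0_if_factors[OF linear_bracket_left linear_proj linear_proj_orth])
  fix x
  have "br (proj_orth x) u = br x u"
    by (simp add: proj_orth_def bracket_simps center_bracket_left[OF proj_in])
  then show "br x u = proj (br (proj_orth x) u)"
    by (simp add: proj_bracket)
  show "proj_orth (proj x) = 0"
    by (rule proj_orth_proj)
qed

lemma map_trace_Jmap_left: "map_trace (\<lambda>x. J x u) = 0"
proof (rule map_trace_eq_0_if_factors[OF linear_Jmap_left linear_proj_orth linear_proj])
  fix x
  show "J x u = proj_orth (J (proj x) u)"
    by (simp add: proj_orth_Jmap Jmap_proj_left[of x u])
  show "proj (proj_orth x) = 0"
    by (rule proj_proj_orth)
qed

lemma map_trace_LC_left: "map_trace (\<lambda>x. LC br g x u) = 0"
proof -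
  have "map_trace (\<lambda>x. LC br g x u)
      = (1/2) * (map_trace (\<lambda>x. br x u) - map_trace (\<lambda>x. J x u) - map_trace (J u))"
    by (simp add: LC_eq map_trace_scaleR map_trace_diff)
  then show ?thesis
    using map_trace_bracket_left map_trace_Jmap_left
      map_trace_skew_eq_0[OF linear_Jmap_right Jmap_skew] by simp
qed

lemma map_trace_Jmap_bracket: "map_trace (\<lambda>x. J (br x y) w) = map_trace proj * g (proj_orth w) y"
proof -
  have "map_trace (\<lambda>x. J (br x y) w) = map_trace (\<lambda>x. br (J x w) y)"
    using map_trace_comp_commute[OF linear_Jmap_left linear_bracket_left] .
  also have "\<dots> = g (\<Sum>i\<in>UNIV. J (dual_basis i) (J (axis i 1) w)) y"
    by (simp add: map_trace_eq_sum_dual_basis form_Jmap form_sum_left)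
  finally show ?thesis
    by (simp add: sum_Jmap_Jmap_dual_basis form_simps)
qed

lemma map_trace_bracket_Jmap_left:
  "map_trace (\<lambda>x. br y (J x w)) = - map_trace proj * g y (proj_orth w)"
proof -
  have "map_trace (\<lambda>x. br y (J x w)) = (\<Sum>i\<in>UNIV. - g y (J (dual_basis i) (J (axis i 1) w)))"
    by (simp add: map_trace_eq_sum_dual_basis flip: form_Jmap Jmap_skew)
  also have "\<dots> = - g y (\<Sum>i\<in>UNIV. J (dual_basis i) (J (axis i 1) w))"
    by (simp add: form_sum_right sum_negf)
  finally show ?thesis
    by (simp add: sum_Jmap_Jmap_dual_basis form_simps)
qed

lemma map_trace_bracket_Jmap_right: "map_trace (\<lambda>x. br y (J w x)) = 0"
proof (rule map_trace_eq_0_if_factors[OF _ linear_proj linear_proj_orth])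
  show "linear (\<lambda>x. br y (J w x))"
    using linear_compose[OF linear_Jmap_right linear_bracket_right] by (simp add: o_def)
  fix x
  show "br y (J w x) = proj (br y (J w (proj_orth x)))"
    by (simp add: proj_bracket Jmap_proj_orth_right[of w x])
  show "proj_orth (proj x) = 0"
    by (rule proj_orth_proj)
qed

lemma map_trace_Jmap_Jmap_left: "map_trace (\<lambda>x. J y (J x w)) = 0"
proof (rule map_trace_eq_0_if_factors[OF _ linear_proj_orth linear_proj])
  show "linear (\<lambda>x. J y (J x w))"
    using linear_compose[OF linear_Jmap_left linear_Jmap_right] by (simp add: o_def)
  fix x
  show "J y (J x w) = proj_orth (J y (J (proj x) w))"
    by (simp add: proj_orth_Jmap Jmap_proj_left[of x w])
  show "proj (proj_orth x) = 0"
    by (rule proj_proj_orth)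
qed

lemma map_trace_Jmap_Jmap_right:
  "map_trace (\<lambda>x. J y (J w x)) = g (proj y) (proj w) * map_trace proj_orth"
proof -
  have "2 * map_trace (\<lambda>x. J y (J w x))
      = map_trace (\<lambda>x. J y (J w x)) + map_trace (\<lambda>x. J w (J y x))"
    using map_trace_comp_commute[OF linear_Jmap_right linear_Jmap_right] by simp
  also have "\<dots> = map_trace (\<lambda>x. (2 * g (proj y) (proj w)) *\<^sub>R proj_orth x)"
    by (simp add: Jmap_anticommutator flip: map_trace_add)
  finally show ?thesis
    by (simp add: map_trace_scaleR)
qed

lemma ricci_tensor_eq:
  "ricci_tensor br g y w
     = (map_trace proj / 2) * g (proj_orth y) w - (map_trace proj_orth / 4) * g (proj y) w"
proof -
  have "ricci_tensor br g y w
      = - map_trace (\<lambda>x. LC br g y (LC br g x w)) - map_trace (\<lambda>x. LC br g (br x y) w)"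
    unfolding ricci_tensor_def curv_def map_trace_def[symmetric]
    by (simp add: map_trace_diff map_trace_LC_left)
  also have "\<dots> = - (1/4) * (map_trace (\<lambda>x. J y (J x w)) + map_trace (\<lambda>x. J y (J w x))
      - map_trace (\<lambda>x. br y (J x w)) - map_trace (\<lambda>x. br y (J w x))
      - map_trace (\<lambda>x. J (br x w) y)) + (1/2) * map_trace (\<lambda>x. J (br x y) w)"
    by (simp add: LC_LC_left LC_bracket_left map_trace_scaleR map_trace_diff map_trace_add
        map_trace_neg)
  also have "\<dots> = - (1/4) * (g (proj y) (proj w) * map_trace proj_orth
      + map_trace proj * g y (proj_orth w) - map_trace proj * g (proj_orth y) w)
      + (1/2) * map_trace proj * g (proj_orth w) y"
    by (simp add: map_trace_Jmap_Jmap_left map_trace_Jmap_Jmap_right map_trace_bracket_Jmap_left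
        map_trace_bracket_Jmap_right map_trace_Jmap_bracket)
  also have "\<dots> = (map_trace proj / 2) * g (proj_orth y) w - (map_trace proj_orth / 4) * g (proj y) w"
    using form_proj_orth_left[of y w] form_proj_orth_right[of y w] form_proj_orth_left[of w y]
      form_sym[of "proj_orth w" "proj_orth y"] form_proj_left[of y w]
    by (simp add: algebra_simps)
  finally show ?thesis .
qed

lemma ricci_op_eq:
  "ricci_op br g y = (map_trace proj / 2) *\<^sub>R proj_orth y - (map_trace proj_orth / 4) *\<^sub>R proj y"
  unfolding ricci_op_def
  by (rule the_representative_eq) (simp add: ricci_tensor_eq form_simps)

lemma derivation_scaleR_proj_orth_plus_proj:
  "derivation br (\<lambda>x. c *\<^sub>R proj_orth x + (2 * c) *\<^sub>R proj x)"
  unfolding derivation_def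
proof (intro conjI allI)
  show "linear (\<lambda>x. c *\<^sub>R proj_orth x + (2 * c) *\<^sub>R proj x)"
    by (rule linearI) (simp_all add: linear_add[OF linear_proj] linear_add[OF linear_proj_orth]
        linear_scale[OF linear_proj] linear_scale[OF linear_proj_orth] algebra_simps)
  fix x y
  have "br (proj_orth x) y = br x y" "br x (proj_orth y) = br x y"
    by (simp_all add: proj_orth_def bracket_simps center_bracket_left[OF proj_in]
        center_bracket_right[OF proj_in])
  then have "br (c *\<^sub>R proj_orth x + (2 * c) *\<^sub>R proj x) y + br x (c *\<^sub>R proj_orth y + (2 * c) *\<^sub>R proj y)
      = c *\<^sub>R br x y + c *\<^sub>R br x y"
    by (simp add: bracket_simps center_bracket_left[OF proj_in] center_bracket_right[OF proj_in])
  moreover have "c *\<^sub>R proj_orth (br x y) + (2 * c) *\<^sub>R proj (br x y) = (c + c) *\<^sub>R br x y"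
    by (simp add: proj_orth_def proj_bracket)
  ultimately show "c *\<^sub>R proj_orth (br x y) + (2 * c) *\<^sub>R proj (br x y)
      = br (c *\<^sub>R proj_orth x + (2 * c) *\<^sub>R proj x) y + br x (c *\<^sub>R proj_orth y + (2 * c) *\<^sub>R proj y)"
    by (simp only: scaleR_add_left)
qed

lemma split_scalars_eq_scaleR_plus_derivation:
  "\<exists>c D. derivation br D \<and> (\<forall>x. a *\<^sub>R proj_orth x + b *\<^sub>R proj x = c *\<^sub>R x + D x)"
proof (intro exI conjI allI)
  show "derivation br (\<lambda>x. (b - a) *\<^sub>R proj_orth x + (2 * (b - a)) *\<^sub>R proj x)"
    by (rule derivation_scaleR_proj_orth_plus_proj)
  fix x
  have "a *\<^sub>R q + b *\<^sub>R p = (2 * a - b) *\<^sub>R (p + q) + ((b - a) *\<^sub>R q + (2 * (b - a)) *\<^sub>R p)"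
    for p q :: "'v::real_vector"
    \<comment> \<open>abstract type: on \<open>real^'n\<close> the simplifier turns \<open>p + p\<close> into the pointwise product \<open>2 * p\<close>\<close>
    by (simp add: algebra_simps flip: scaleR_add_left)
  then show "a *\<^sub>R proj_orth x + b *\<^sub>R proj x
      = (2 * a - b) *\<^sub>R x + ((b - a) *\<^sub>R proj_orth x + (2 * (b - a)) *\<^sub>R proj x)"
    by (metis proj_add_proj_orth)
qed

end

theorem mainTheorem1:
  fixes br :: "real^'n \<Rightarrow> real^'n \<Rightarrow> real^'n"
    and g :: "real^'n \<Rightarrow> real^'n \<Rightarrow> real"
  assumes "lie_bracket br"
    and "two_step_nilpotent br"
    and "pseudo_metric g"
    and "nondegenerate_on g (center br)"
    and "pseudoH_type br g"
  shows "\<exists>c D. derivation br D \<and> (\<forall>x. ricci_op br g x = c *\<^sub>R x + D x)"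
proof -
  interpret pseudoH_algebra g br
    using assms by unfold_locales
  show ?thesis
    using split_scalars_eq_scaleR_plus_derivation[of "map_trace proj / 2" "- map_trace proj_orth / 4"]
    by (simp add: ricci_op_eq)
qed

end
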